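(* If $\mu>-2$ and $|\nu|<|\mu+1|$, then $x\mapsto I_{\mu+1}(x)/\tilde{t}_{\mu,\nu}(x)$ is strictly increasing on $(0,\infty)$. If $\mu>-2$ and $|\mu+1|<|\nu|<\mu+3$, then $x\mapsto I_{\mu+1}(x)/\tilde{t}_{\mu,\nu}(x)$ is strictly decreasing on $(0,\infty)$.
   Context: For real $\mu,\nu$ the (normalized) modified Lommel function of the first kind is $$\tilde{t}_{\mu,\nu}(x)=\sum_{k=0}^\infty\frac{(\frac{1}{2}x)^{\mu+2k+1}}{\Gamma\big(k+\frac{\mu-\nu+3}{2}\big)\Gamma\big(k+\frac{\mu+\nu+3}{2}\big)},\quad x>0,$$ and $I_\alpha(x)=\sum_{k=0}^\infty\frac{(\frac{1}{2}x)^{2k+\alpha}}{k!\,\Gamma(k+\alpha+1)}$ is the modified Bessel function of the first kind. *)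

theory Defs
  imports "HOL-Analysis.Analysis"
begin

definition besselI :: "real \<Rightarrow> real \<Rightarrow> real" where
  "besselI \<alpha> x = (\<Sum>k. (x / 2) powr (2 * real k + \<alpha>) / (fact k * Gamma (real k + \<alpha> + 1)))"

text \<open>Normalized modified Lommel function of the first kind, for x > 0.
  Reciprocal Gamma is used (rGamma), so terms at poles of Gamma vanish.\<close>
definition lommel_t :: "real \<Rightarrow> real \<Rightarrow> real \<Rightarrow> real" where
  "lommel_t \<mu> \<nu> x = (\<Sum>k. (x / 2) powr (\<mu> + 2 * real k + 1)
      * rGamma (real k + (\<mu> - \<nu> + 3) / 2) * rGamma (real k + (\<mu> + \<nu> + 3) / 2))"

end

theory Submission
  imports Defs "HOL-Real_Asymp.Real_Asymp"
begin

(* After pulling out the common factor (x/2)^(mu+1), both functions are power series in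
   y = (x/2)^2 with coefficients rGamma(k+p) rGamma(k+q): (p,q) = (1, mu+2) for the Bessel
   function and (p,q) = (a,b) = ((mu-nu+3)/2, (mu+nu+3)/2) for the Lommel function.  Since
   a + b = 1 + (mu+2), the quotient of consecutive coefficient ratios is
   (k+a)(k+b)/((k+1)(k+mu+2)), which lies on one side of 1 for all k, according to the sign of
   ab - (mu+2) = ((mu+1)^2 - nu^2)/4.  So the coefficient ratio is monotone in k, and by the
   Biernacki-Krzyz lemma so is the ratio of the two power series in y. *)

definition rGamma_coeff :: "real \<Rightarrow> real \<Rightarrow> nat \<Rightarrow> real" where
  "rGamma_coeff p q k = rGamma (real k + p) * rGamma (real k + q)"

lemma rGamma_coeff_pos: "0 < p \<Longrightarrow> 0 < q \<Longrightarrow> 0 < rGamma_coeff p q k"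
  by (simp add: rGamma_coeff_def rGamma_inverse_Gamma)

lemma rGamma_coeff_Suc:
  "(real k + p) * (real k + q) * rGamma_coeff p q (Suc k) = rGamma_coeff p q k"
  using rGamma_plus1[of "real k + p"] rGamma_plus1[of "real k + q"]
  by (simp add: rGamma_coeff_def add_ac mult_ac)

lemma summable_rGamma_coeff_power: "summable (\<lambda>k. rGamma_coeff p q k * y ^ k)"
proof -
  have "filterlim (\<lambda>k. (real k + p) * (real k + q)) at_top sequentially"
    by real_asymp
  then obtain N where N: "\<And>k. k \<ge> N \<Longrightarrow> 2 * \<bar>y\<bar> + 1 \<le> (real k + p) * (real k + q)"
    unfolding filterlim_at_top eventually_sequentially by blast
  show ?thesis
  proof (rule summable_ratio_test[of "1/2" N])
    fix k assume "k \<ge> N"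
    define g where "g = rGamma_coeff p q"
    have "\<bar>g (Suc k) * y ^ Suc k\<bar> * (2 * \<bar>y\<bar> + 1)
        \<le> \<bar>g (Suc k) * y ^ Suc k\<bar> * ((real k + p) * (real k + q))"
      using N[OF \<open>k \<ge> N\<close>] by (intro mult_left_mono) auto
    also have "\<dots> = \<bar>g k * y ^ k\<bar> * \<bar>y\<bar>"
    proof -
      have "0 < (real k + p) * (real k + q)"
        using N[OF \<open>k \<ge> N\<close>] by linarith
      then have "\<bar>g k\<bar> = (real k + p) * (real k + q) * \<bar>g (Suc k)\<bar>"
        by (metis abs_mult abs_of_pos g_def rGamma_coeff_Suc)
      then show ?thesis
        by (simp add: abs_mult mult_ac)
    qed
    also have "\<dots> \<le> \<bar>g k * y ^ k\<bar> * ((2 * \<bar>y\<bar> + 1) / 2)"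
      by (intro mult_left_mono) auto
    finally have "\<bar>g (Suc k) * y ^ Suc k\<bar> * (2 * \<bar>y\<bar> + 1)
        \<le> (1/2 * \<bar>g k * y ^ k\<bar>) * (2 * \<bar>y\<bar> + 1)"
      by (simp add: field_simps)
    then have "\<bar>g (Suc k) * y ^ Suc k\<bar> \<le> 1/2 * \<bar>g k * y ^ k\<bar>"
      by (rule mult_right_le_imp_le) simp
    then show "norm (g (Suc k) * y ^ Suc k) \<le> 1/2 * norm (g k * y ^ k)"
      by simp
  qed simp
qed

lemma strict_mono_rGamma_coeff_ratio:
  assumes "0 < p" "0 < q" "0 < p'" "0 < q'" "p + q \<le> p' + q'" "p * q < p' * q'"
  shows "strict_mono (\<lambda>k. rGamma_coeff p q k / rGamma_coeff p' q' k)"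
proof (unfold strict_mono_Suc_iff, intro allI)
  fix k
  let ?r = "\<lambda>k. rGamma_coeff p q k / rGamma_coeff p' q' k"
  have pos: "0 < (real k + p) * (real k + q)" "0 < (real k + p') * (real k + q')"
    using assms by auto
  have factor: "(real k + p) * (real k + q) < (real k + p') * (real k + q')"
    using assms mult_left_mono[OF assms(5), of "real k"]
    by (simp add: algebra_simps)
  have "?r k = ?r (Suc k) * ((real k + p) * (real k + q) / ((real k + p') * (real k + q')))"
    using assms
    by (simp add: field_simps flip: rGamma_coeff_Suc[of k p q] rGamma_coeff_Suc[of k p' q'])
  also have "\<dots> < ?r (Suc k)"
    using pos factor assms rGamma_coeff_pos[of p q "Suc k"] rGamma_coeff_pos[of p' q' "Suc k"]
    by (simp add: mult_less_cancel_left2 divide_less_eq)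
  finally show "?r k < ?r (Suc k)" .
qed

lemma power_cross_le:
  fixes s t :: real
  assumes "0 \<le> s" "s \<le> t" "i \<le> n"
  shows "t ^ i * s ^ n \<le> t ^ n * s ^ i"
proof -
  have n: "n = i + (n - i)"
    using assms by simp
  have "(t ^ i * s ^ i) * s ^ (n - i) \<le> (t ^ i * s ^ i) * t ^ (n - i)"
    using assms by (intro mult_left_mono power_mono) auto
  then show ?thesis
    by (subst (1 2) n, simp only: power_add) (simp add: algebra_simps)
qed

lemma power_series_cross_less:
  fixes c d :: "nat \<Rightarrow> real"
  assumes coeff_less: "\<And>i j. i < j \<Longrightarrow> c i * d j < c j * d i"
    and summable: "\<And>y. y \<in> {s, t} \<Longrightarrow> summable (\<lambda>k. c k * y ^ k) \<and> summable (\<lambda>k. d k * y ^ k)"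
    and "0 < s" "s < t"
  shows "(\<Sum>k. c k * s ^ k) * (\<Sum>k. d k * t ^ k) < (\<Sum>k. c k * t ^ k) * (\<Sum>k. d k * s ^ k)"
proof -
  \<comment> \<open>The truncated cross difference grows by nonnegative terms, and its second one is positive.\<close>
  define D where "D n = (\<Sum>k<n. c k * t ^ k) * (\<Sum>k<n. d k * s ^ k)
      - (\<Sum>k<n. c k * s ^ k) * (\<Sum>k<n. d k * t ^ k)" for n
  have D_Suc: "D (Suc n) = D n + (\<Sum>i<n. (c n * d i - c i * d n) * (t ^ n * s ^ i - t ^ i * s ^ n))"
    for n
  proof -
    have "(\<Sum>i<n. (c n * d i - c i * d n) * (t ^ n * s ^ i - t ^ i * s ^ n))
        = c n * t ^ n * (\<Sum>k<n. d k * s ^ k) - c n * s ^ n * (\<Sum>k<n. d k * t ^ k)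
          - d n * t ^ n * (\<Sum>k<n. c k * s ^ k) + d n * s ^ n * (\<Sum>k<n. c k * t ^ k)"
      by (simp add: sum_distrib_left sum_subtractf[symmetric] sum.distrib[symmetric] algebra_simps)
    then show ?thesis
      by (simp add: D_def algebra_simps)
  qed
  have "D n \<le> D (Suc n)" for n
  proof -
    have "0 \<le> (c n * d i - c i * d n) * (t ^ n * s ^ i - t ^ i * s ^ n)" if "i < n" for i
      using less_imp_le[OF coeff_less[OF that]] power_cross_le[of s t i n] that assms(3,4)
      by (intro mult_nonneg_nonneg) auto
    then show ?thesis
      unfolding D_Suc by (auto intro: sum_nonneg)
  qed
  then have "incseq D"
    by (rule incseq_SucI)
  moreover have "D \<longlonglongrightarrow> (\<Sum>k. c k * t ^ k) * (\<Sum>k. d k * s ^ k) - (\<Sum>k. c k * s ^ k) * (\<Sum>k. d k * t ^ k)"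
    unfolding D_def using summable by (intro tendsto_intros summable_LIMSEQ) auto
  ultimately have "D 2 \<le> (\<Sum>k. c k * t ^ k) * (\<Sum>k. d k * s ^ k) - (\<Sum>k. c k * s ^ k) * (\<Sum>k. d k * t ^ k)"
    by (intro LIMSEQ_le_const) (auto simp: incseq_def)
  moreover have "D 2 = (c 1 * d 0 - c 0 * d 1) * (t - s)"
    using D_Suc[of 1] D_Suc[of 0] by (simp add: D_def numeral_2_eq_2)
  moreover have "0 < (c 1 * d 0 - c 0 * d 1) * (t - s)"
    using coeff_less[of 0 1] assms by simp
  ultimately show ?thesis
    by simp
qed

lemma power_series_pos:
  fixes c :: "nat \<Rightarrow> real"
  assumes "\<And>k. 0 < c k" "summable (\<lambda>k. c k * y ^ k)" "0 < y"
  shows "0 < (\<Sum>k. c k * y ^ k)"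
  using assms by (intro suminf_pos) auto

lemma strict_mono_on_power_series_ratio:
  fixes c d :: "nat \<Rightarrow> real"
  assumes pos: "\<And>k. 0 < c k" "\<And>k. 0 < d k"
    and ratio: "strict_mono (\<lambda>k. c k / d k)"
    and summable: "\<And>y. 0 < y \<Longrightarrow> summable (\<lambda>k. c k * y ^ k) \<and> summable (\<lambda>k. d k * y ^ k)"
  shows "strict_mono_on {0<..} (\<lambda>y. (\<Sum>k. c k * y ^ k) / (\<Sum>k. d k * y ^ k))"
proof (rule monotone_onI)
  fix s t :: real
  assume "s \<in> {0<..}" "t \<in> {0<..}" "s < t"
  have "c i * d j < c j * d i" if "i < j" for i j
    using strict_monoD[OF ratio that] pos[of i] pos[of j] by (simp add: field_simps)
  then have "(\<Sum>k. c k * s ^ k) * (\<Sum>k. d k * t ^ k) < (\<Sum>k. c k * t ^ k) * (\<Sum>k. d k * s ^ k)"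
    using summable \<open>s \<in> {0<..}\<close> \<open>t \<in> {0<..}\<close> \<open>s < t\<close>
    by (intro power_series_cross_less) auto
  moreover have "0 < (\<Sum>k. d k * y ^ k)" if "0 < y" for y
    using summable[OF that] pos that by (intro power_series_pos) auto
  ultimately show "(\<Sum>k. c k * s ^ k) / (\<Sum>k. d k * s ^ k) < (\<Sum>k. c k * t ^ k) / (\<Sum>k. d k * t ^ k)"
    using \<open>s \<in> {0<..}\<close> \<open>t \<in> {0<..}\<close> by (simp add: divide_less_eq less_divide_eq mult_ac)
qed

lemma strict_antimono_on_power_series_ratio:
  fixes c d :: "nat \<Rightarrow> real"
  assumes pos: "\<And>k. 0 < c k" "\<And>k. 0 < d k"
    and ratio: "strict_mono (\<lambda>k. d k / c k)"
    and summable: "\<And>y. 0 < y \<Longrightarrow> summable (\<lambda>k. c k * y ^ k) \<and> summable (\<lambda>k. d k * y ^ k)"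
  shows "strict_antimono_on {0<..} (\<lambda>y. (\<Sum>k. c k * y ^ k) / (\<Sum>k. d k * y ^ k))"
proof (rule monotone_onI)
  fix s t :: real
  assume st: "s \<in> {0<..}" "t \<in> {0<..}" "s < t"
  have "strict_mono_on {0<..} (\<lambda>y. (\<Sum>k. d k * y ^ k) / (\<Sum>k. c k * y ^ k))"
    using assms by (intro strict_mono_on_power_series_ratio) auto
  then have "(\<Sum>k. d k * s ^ k) / (\<Sum>k. c k * s ^ k) < (\<Sum>k. d k * t ^ k) / (\<Sum>k. c k * t ^ k)"
    using monotone_onD st by fastforce
  moreover have "0 < (\<Sum>k. c k * y ^ k)" "0 < (\<Sum>k. d k * y ^ k)" if "0 < y" for y
    using summable[OF that] pos that by (auto intro: power_series_pos)
  ultimately show "(\<Sum>k. c k * t ^ k) / (\<Sum>k. d k * t ^ k) < (\<Sum>k. c k * s ^ k) / (\<Sum>k. d k * s ^ k)"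
    using st by (simp add: divide_less_eq less_divide_eq mult_ac)
qed

lemma powr_add_mult_2_nat:
  fixes x :: real
  assumes "0 < x"
  shows "x powr (e + 2 * real k) = x powr e * (x ^ 2) ^ k"
proof -
  have "x powr (2 * real k) = x powr real (2 * k)"
    by simp
  also have "\<dots> = x ^ (2 * k)"
    by (rule powr_realpow[OF assms])
  finally have "x powr (2 * real k) = x ^ (2 * k)" .
  then show ?thesis
    by (simp add: powr_add power_mult)
qed

lemma besselI_eq_rGamma_coeff_series:
  assumes "0 < x"
  shows "besselI \<alpha> x = (x / 2) powr \<alpha> * (\<Sum>k. rGamma_coeff 1 (\<alpha> + 1) k * ((x / 2) ^ 2) ^ k)"
proof -
  have "(x / 2) powr (2 * real k + \<alpha>) / (fact k * Gamma (real k + \<alpha> + 1))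
      = (x / 2) powr \<alpha> * (rGamma_coeff 1 (\<alpha> + 1) k * ((x / 2) ^ 2) ^ k)" for k
  proof -
    have "rGamma (real k + 1) = inverse (fact k)"
      using Gamma_fact[of k] by (simp add: rGamma_inverse_Gamma add.commute)
    then have coeff: "rGamma_coeff 1 (\<alpha> + 1) k = inverse (fact k) * inverse (Gamma (real k + \<alpha> + 1))"
      by (simp add: rGamma_coeff_def rGamma_inverse_Gamma ac_simps)
    have power: "(x / 2) powr (2 * real k + \<alpha>) = (x / 2) powr \<alpha> * ((x / 2) ^ 2) ^ k"
      using assms powr_add_mult_2_nat[of "x / 2" \<alpha> k] by (simp add: add.commute)
    show ?thesis
      unfolding coeff power by (simp only: divide_inverse inverse_mult_distrib ac_simps)
  qed
  then show ?thesis
    unfolding besselI_def by (simp only: suminf_mult[OF summable_rGamma_coeff_power])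
qed

lemma lommel_t_eq_rGamma_coeff_series:
  assumes "0 < x"
  shows "lommel_t \<mu> \<nu> x = (x / 2) powr (\<mu> + 1)
    * (\<Sum>k. rGamma_coeff ((\<mu> - \<nu> + 3) / 2) ((\<mu> + \<nu> + 3) / 2) k * ((x / 2) ^ 2) ^ k)"
proof -
  have "(x / 2) powr (\<mu> + 2 * real k + 1) * rGamma (real k + (\<mu> - \<nu> + 3) / 2)
        * rGamma (real k + (\<mu> + \<nu> + 3) / 2)
      = (x / 2) powr (\<mu> + 1) * (rGamma_coeff ((\<mu> - \<nu> + 3) / 2) ((\<mu> + \<nu> + 3) / 2) k
        * ((x / 2) ^ 2) ^ k)" for k
  proof -
    have power: "(x / 2) powr (\<mu> + 2 * real k + 1) = (x / 2) powr (\<mu> + 1) * ((x / 2) ^ 2) ^ k"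
      using assms powr_add_mult_2_nat[of "x / 2" "\<mu> + 1" k] by (simp add: ac_simps)
    show ?thesis
      unfolding power rGamma_coeff_def by (simp only: ac_simps)
  qed
  then show ?thesis
    unfolding lommel_t_def by (simp only: suminf_mult[OF summable_rGamma_coeff_power])
qed

lemma monotone_on_besselI_div_lommel_t:
  assumes "monotone_on {0<..} (<) ord (\<lambda>y. (\<Sum>k. rGamma_coeff 1 (\<mu> + 2) k * y ^ k)
    / (\<Sum>k. rGamma_coeff ((\<mu> - \<nu> + 3) / 2) ((\<mu> + \<nu> + 3) / 2) k * y ^ k))"
    (is "monotone_on _ _ _ ?F")
  shows "monotone_on {0<..} (<) ord (\<lambda>x. besselI (\<mu> + 1) x / lommel_t \<mu> \<nu> x)"
proof (rule monotone_onI)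
  have ratio: "besselI (\<mu> + 1) x / lommel_t \<mu> \<nu> x = ?F ((x / 2) ^ 2)" if "0 < x" for x
    using that
    by (simp add: besselI_eq_rGamma_coeff_series lommel_t_eq_rGamma_coeff_series add_ac)
  fix x x' :: real
  assume "x \<in> {0<..}" "x' \<in> {0<..}" "x < x'"
  then have "ord (?F ((x / 2) ^ 2)) (?F ((x' / 2) ^ 2))"
    by (intro monotone_onD[OF assms] power_strict_mono) auto
  then show "ord (besselI (\<mu> + 1) x / lommel_t \<mu> \<nu> x) (besselI (\<mu> + 1) x' / lommel_t \<mu> \<nu> x')"
    using \<open>x \<in> {0<..}\<close> \<open>x' \<in> {0<..}\<close> by (simp add: ratio)
qed

theorem theorem3p2:
  fixes \<mu> \<nu> :: real
  shows "(\<mu> > -2 \<and> \<bar>\<nu>\<bar> < \<bar>\<mu> + 1\<bar> \<longrightarrow>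
            strict_mono_on {0<..} (\<lambda>x. besselI (\<mu> + 1) x / lommel_t \<mu> \<nu> x))
       \<and> (\<mu> > -2 \<and> \<bar>\<mu> + 1\<bar> < \<bar>\<nu>\<bar> \<and> \<bar>\<nu>\<bar> < \<mu> + 3 \<longrightarrow>
            strict_antimono_on {0<..} (\<lambda>x. besselI (\<mu> + 1) x / lommel_t \<mu> \<nu> x))"
proof -
  let ?a = "(\<mu> - \<nu> + 3) / 2" and ?b = "(\<mu> + \<nu> + 3) / 2"
  have ab: "?a * ?b = 1 * (\<mu> + 2) + ((\<mu> + 1)\<^sup>2 - \<nu>\<^sup>2) / 4" "?a + ?b = 1 + (\<mu> + 2)"
    by (simp_all add: field_simps power2_eq_square)
  note series_facts = rGamma_coeff_pos summable_rGamma_coeff_power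
  show ?thesis
  proof (intro conjI impI)
    assume h: "\<mu> > -2 \<and> \<bar>\<nu>\<bar> < \<bar>\<mu> + 1\<bar>"
    then have "0 < ?a" "0 < ?b" "1 * (\<mu> + 2) < ?a * ?b"
      using abs_le_square_iff[of "\<mu> + 1" \<nu>] unfolding ab by (auto simp: abs_less_iff)
    with h show "strict_mono_on {0<..} (\<lambda>x. besselI (\<mu> + 1) x / lommel_t \<mu> \<nu> x)"
      by (intro monotone_on_besselI_div_lommel_t strict_mono_on_power_series_ratio
          strict_mono_rGamma_coeff_ratio series_facts conjI) (auto simp: ab)
  next
    assume h: "\<mu> > -2 \<and> \<bar>\<mu> + 1\<bar> < \<bar>\<nu>\<bar> \<and> \<bar>\<nu>\<bar> < \<mu> + 3"
    then have "0 < ?a" "0 < ?b" "?a * ?b < 1 * (\<mu> + 2)"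
      using abs_le_square_iff[of \<nu> "\<mu> + 1"] unfolding ab by (auto simp: abs_less_iff)
    with h show "strict_antimono_on {0<..} (\<lambda>x. besselI (\<mu> + 1) x / lommel_t \<mu> \<nu> x)"
      by (intro monotone_on_besselI_div_lommel_t strict_antimono_on_power_series_ratio
          strict_mono_rGamma_coeff_ratio series_facts conjI) (auto simp: ab)
  qed
qed

end
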